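(* Let $\Delta$, $\Gamma$ be arbitrary contexts, both possibly containing locks, $A$ an arbitrary type, and $t$ a term of type $A$ of $\mathrm{IK}_C$ (or $\mathrm{IS4}_C$) in the concatenated context $\Delta, \Gamma$ that does not mention any variables from $\Delta$. Then there is a term $t'$ of type $A$ in context $\Gamma$ of $\mathrm{IK}_C$ (or $\mathrm{IS4}_C$, respectively).
   Context: Types $A::=\iota\mid A\to B\mid\Box A$; contexts $\Gamma::=\cdot\mid\Gamma,A\mid\Gamma,\mathsf{lock}$ ($\mathsf{lock}$ the context lock); $\Delta,\Gamma$ denotes context concatenation. Both calculi have STLC terms plus $\mathsf{box}\,t:\Box A$ in $\Gamma$ from $t:A$ in $\Gamma,\mathsf{lock}$, and $\mathsf{unbox}(t,e):A$ in $\Gamma$ from $t:\Box A$ in $\Delta$ and $e:\Delta\mathrel{R}\Gamma$, where in $\mathrm{IK}_C$, $\Delta\mathrel{R}\Gamma$ means $\Gamma=\Delta,\mathsf{lock},\Delta'$ with $\Delta'$ lock-free, and in $\mathrm{IS4}_C$ it means $\Gamma$ extends $\Delta$ by any types and locks. Both calculi have normalization functions (via NbE) into $\beta\eta$-normal forms, which do not introduce new free variables. *)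

theory Defs
  imports Main
begin

datatype ty = Iota | Fun ty ty | Box ty

text \<open>Context entries; a context is a list whose LAST element is the most recent
  entry, so context concatenation \<open>\<Delta>, \<Gamma>\<close> is \<open>\<Delta> @ \<Gamma>\<close>.\<close>
datatype entry = T ty | Lock

type_synonym ctx = "entry list"

definition lock_free :: "ctx \<Rightarrow> bool" where
  "lock_free G \<longleftrightarrow> Lock \<notin> set G"

definition ntys :: "ctx \<Rightarrow> nat" where
  "ntys G = length (filter (\<lambda>e. e \<noteq> Lock) G)"

datatype calculus = IK_C | IS4_C

text \<open>Raw terms with de Bruijn indices (counting variables, not locks, from the
  right end of the context).  \<open>Unbox t e\<close> carries the witness \<open>e\<close> of \<open>\<Delta> R \<Gamma>\<close>,
  represented as the extension \<open>e\<close> with \<open>\<Gamma> = \<Delta> @ e\<close>.\<close>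
datatype tm = Var nat | Lam tm | App tm tm | BoxI tm | Unbox tm ctx

fun ext_ok :: "calculus \<Rightarrow> ctx \<Rightarrow> bool" where
  "ext_ok IK_C e \<longleftrightarrow> (\<exists>e'. e = Lock # e' \<and> lock_free e')"
| "ext_ok IS4_C e \<longleftrightarrow> True"

inductive typed :: "calculus \<Rightarrow> ctx \<Rightarrow> tm \<Rightarrow> ty \<Rightarrow> bool" where
  var: "lock_free G2 \<Longrightarrow> typed c (G1 @ [T A] @ G2) (Var (length G2)) A"
| lam: "typed c (G @ [T A]) t B \<Longrightarrow> typed c G (Lam t) (Fun A B)"
| app: "typed c G t (Fun A B) \<Longrightarrow> typed c G u A \<Longrightarrow> typed c G (App t u) B"
| box: "typed c (G @ [Lock]) t A \<Longrightarrow> typed c G (BoxI t) (Box A)"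
| unbox: "typed c D t (Box A) \<Longrightarrow> ext_ok c e \<Longrightarrow> typed c (D @ e) (Unbox t e) A"

fun fv :: "tm \<Rightarrow> nat set" where
  "fv (Var n) = {n}"
| "fv (Lam t) = {n. Suc n \<in> fv t}"
| "fv (App t u) = fv t \<union> fv u"
| "fv (BoxI t) = fv t"
| "fv (Unbox t e) = (\<lambda>n. n + ntys e) ` fv t"

end

theory Submission
  imports Defs
begin

(* Induction on the typing derivation, splitting the context D @ G at every node.  The split
   propagates through every rule except an unbox whose lock extension e swallows all of G;
   then the boxed subterm is closed, and a closed inhabitant of Box A yields one of A in any
   context.  In IS4 this is a direct unbox.  In IK, where unbox demands exactly one lock, it
   follows from admissibility of collapsing the oldest lock: the entries before it are moved
   into the next world, with drop_box reading each outermost Box B in their types as B (the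
   root world is identified with its successor). *)

lemma ntys_append [simp]: "ntys (G @ G') = ntys G + ntys G'"
  by (simp add: ntys_def)

lemma ntys_simps [simp]: "ntys [] = 0" "ntys [T A] = 1" "ntys [Lock] = 0"
  by (simp_all add: ntys_def)

lemma ntys_le_length: "ntys G \<le> length G"
  unfolding ntys_def by (rule length_filter_le)

lemma append_Cons_eq_append_conv:
  "xs @ x # ys = zs @ ws \<longleftrightarrow>
    (\<exists>us. zs = xs @ x # us \<and> ys = us @ ws) \<or> (\<exists>us. ws = us @ x # ys \<and> xs = zs @ us)"
  by (auto simp: append_eq_append_conv2 Cons_eq_append_conv)

lemma fv_Lam_bounded:
  assumes "fv (Lam t) \<subseteq> {..<n}"
  shows "fv t \<subseteq> {..<Suc n}"
proof
  fix x
  assume "x \<in> fv t"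
  with assms show "x \<in> {..<Suc n}" by (cases x) auto
qed

lemma fv_Unbox_bounded: "fv (Unbox t e) \<subseteq> {..<n + ntys e} \<Longrightarrow> fv t \<subseteq> {..<n}"
  by auto

lemma var_entry_in_suffix:
  assumes "Gl @ [T A] @ Gr = D @ G" and "lock_free Gr" and "length Gr < ntys G"
  shows "\<exists>us. G = us @ [T A] @ Gr"
proof -
  have "\<not> (\<exists>us. Gr = us @ G)"
    using assms(3) ntys_le_length[of G] by auto
  with assms(1) show ?thesis by (auto simp: append_Cons_eq_append_conv)
qed

lemma ext_ok_insert_lock_free:
  "ext_ok c (us @ G) \<Longrightarrow> us \<noteq> [] \<Longrightarrow> lock_free W \<Longrightarrow> ext_ok c (us @ W @ G)"
  by (cases c) (auto simp: lock_free_def neq_Nil_conv)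

lemma typed_weaken_left: "typed c G t A \<Longrightarrow> typed c (W @ G) t A"
  by (induction rule: typed.induct) (metis append_assoc typed.intros)+

lemma typed_insert_lock_free:
  assumes "typed c (G1 @ G2) t A" and "lock_free W"
  shows "\<exists>t'. typed c (G1 @ W @ G2) t' A"
  using assms(1)
proof (induction "G1 @ G2" t A arbitrary: G2 rule: typed.induct)
  case (var Gr c Gl A)
  from \<open>Gl @ [T A] @ Gr = G1 @ G2\<close> consider
      us where "G1 = Gl @ T A # us" "Gr = us @ G2"
    | us where "G2 = us @ T A # Gr" "Gl = G1 @ us"
    by (auto simp: append_Cons_eq_append_conv)
  then show ?case
  proof cases
    case 1
    with var.hyps assms(2) have "lock_free (us @ W @ G2)" by (simp add: lock_free_def)
    from typed.var[OF this, of c Gl A] show ?thesis using 1 by auto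
  next
    case 2
    from typed.var[OF \<open>lock_free Gr\<close>, of c "G1 @ W @ us" A] show ?thesis using 2 by auto
  qed
next
  case (lam c A t B)
  then show ?case by (metis append_assoc typed.lam)
next
  case (app c t A B u)
  then show ?case by (metis typed.app)
next
  case (box c t A)
  then show ?case by (metis append_assoc typed.box)
next
  case (unbox c D t A e)
  from \<open>D @ e = G1 @ G2\<close> consider
      us where "D = G1 @ us" "G2 = us @ e"
    | us where "G1 = D @ us" "e = us @ G2" "us \<noteq> []"
    by (metis append_Nil append_Nil2 append_eq_append_conv2)
  then show ?case
  proof cases
    case 1
    with unbox.hyps(2) obtain t' where "typed c (G1 @ W @ us) t' (Box A)" by blast
    from typed.unbox[OF this \<open>ext_ok c e\<close>] show ?thesis using 1 by auto
  next
    case 2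
    with \<open>ext_ok c e\<close> assms(2) have "ext_ok c (us @ W @ G2)" by (simp add: ext_ok_insert_lock_free)
    from typed.unbox[OF unbox.hyps(1) this] show ?thesis using 2 by auto
  qed
qed

lemma typed_weaken_right: "typed c G t A \<Longrightarrow> lock_free W \<Longrightarrow> \<exists>t'. typed c (G @ W) t' A"
  using typed_insert_lock_free[of c G "[]"] by simp

fun drop_box :: "ty \<Rightarrow> ty" where
  "drop_box Iota = Iota"
| "drop_box (Fun A B) = Fun (drop_box A) (drop_box B)"
| "drop_box (Box A) = A"

fun collapse :: "ctx \<Rightarrow> ctx" where
  "collapse [] = []"
| "collapse (Lock # G) = G"
| "collapse (T A # G) = T (drop_box A) # collapse G"

lemma collapse_append:
  "collapse (G @ G') = (if lock_free G then collapse G @ collapse G' else collapse G @ G')"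
  by (induction G rule: collapse.induct) (auto simp: lock_free_def)

lemma lock_free_collapse: "lock_free G \<Longrightarrow> lock_free (collapse G)"
  by (induction G rule: collapse.induct) (auto simp: lock_free_def)

lemma length_collapse_lock_free: "lock_free G \<Longrightarrow> length (collapse G) = length G"
  by (induction G rule: collapse.induct) (auto simp: lock_free_def)

lemma typed_IK_collapse:
  "typed IK_C G t A \<Longrightarrow> \<exists>t'. typed IK_C (collapse G) t' (if lock_free G then drop_box A else A)"
proof (induction IK_C G t A rule: typed.induct)
  case (var G2 G1 A)
  show ?case
  proof (cases "lock_free G1")
    case True
    with var have "lock_free (collapse G2)" "length (collapse G2) = length G2"
      by (simp_all add: lock_free_collapse length_collapse_lock_free)
    from typed.var[OF this(1), of IK_C "collapse G1" "drop_box A"] show ?thesis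
      using True var by (auto simp: collapse_append lock_free_def)
  next
    case False
    from typed.var[OF var, of IK_C "collapse G1" A] show ?thesis
      using False by (auto simp: collapse_append lock_free_def)
  qed
next
  case (lam G A t B)
  then show ?case
    by (cases "lock_free G") (auto simp: collapse_append lock_free_def intro: typed.lam)
next
  case (app G t A B u)
  then show ?case
    by (cases "lock_free G") (auto intro: typed.app)
next
  case (box G t A)
  then show ?case
    by (cases "lock_free G") (auto simp: collapse_append lock_free_def intro: typed.box)
next
  case (unbox D t A e)
  then obtain e' where e: "e = Lock # e'" "lock_free e'" by auto
  show ?case
  proof (cases "lock_free D")
    case True
    with unbox.hyps(2) obtain t' where "typed IK_C (collapse D) t' A" by auto
    from typed_weaken_right[OF this e(2)] show ?thesis
      using True e by (simp add: collapse_append lock_free_def)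
  next
    case False
    with unbox.hyps(2) obtain t' where "typed IK_C (collapse D) t' (Box A)" by auto
    from typed.unbox[OF this unbox.hyps(3)] show ?thesis
      using False by (auto simp: collapse_append lock_free_def)
  qed
qed

lemma typed_closed_Box_elim:
  assumes "typed c [] s (Box A)"
  shows "\<exists>t'. typed c G t' A"
proof (cases c)
  case IK_C
  with typed_IK_collapse[of "[]" s "Box A"] assms obtain t' where "typed c [] t' A"
    by (auto simp: lock_free_def)
  from typed_weaken_left[OF this, of G] show ?thesis by auto
next
  case IS4_C
  from typed.unbox[OF assms, of G] show ?thesis using IS4_C by auto
qed

theorem lemma3:
  fixes c :: calculus and D G :: ctx and t :: tm and A :: ty
  assumes "typed c (D @ G) t A"
    and "fv t \<subseteq> {..< ntys G}"
  shows "\<exists>t'. typed c G t' A"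
  using assms
proof (induction "D @ G" t A arbitrary: D G rule: typed.induct)
  case (var Gr c Gl A)
  then obtain us where "G = us @ [T A] @ Gr" using var_entry_in_suffix[of Gl A Gr D G] by auto
  with typed.var[OF \<open>lock_free Gr\<close>] show ?case by blast
next
  case (lam c A t B)
  from fv_Lam_bounded[OF lam(3)] have "fv t \<subseteq> {..<ntys (G @ [T A])}" by simp
  with lam(2)[of D "G @ [T A]"] obtain t' where "typed c (G @ [T A]) t' B" by auto
  then show ?case by (blast intro: typed.lam)
next
  case (app c t A B u)
  from app(5) have "fv t \<subseteq> {..<ntys G}" "fv u \<subseteq> {..<ntys G}" by simp_all
  with app(2)[of D G] app(4)[of D G] show ?case by (blast intro: typed.app)
next
  case (box c t A)
  from box(3) have "fv t \<subseteq> {..<ntys (G @ [Lock])}" by simp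
  with box(2)[of D "G @ [Lock]"] obtain t' where "typed c (G @ [Lock]) t' A" by auto
  then show ?case by (blast intro: typed.box)
next
  case (unbox c D' s A e)
  from \<open>D' @ e = D @ G\<close> consider
      us where "D' = D @ us" "G = us @ e"
    | us where "D = D' @ us" "e = us @ G"
    by (auto simp: append_eq_append_conv2)
  then show ?case
  proof cases
    case 1
    with unbox(5) have "fv s \<subseteq> {..<ntys us}" using fv_Unbox_bounded[of s e] by simp
    with unbox(2)[of D us] 1 obtain s' where "typed c us s' (Box A)" by auto
    from typed.unbox[OF this \<open>ext_ok c e\<close>] show ?thesis using 1 by auto
  next
    case 2
    with unbox(5) have "fv s \<subseteq> {..<ntys []}" using fv_Unbox_bounded[of s e 0] by auto
    with unbox(2)[of D' "[]"] obtain s' where "typed c [] s' (Box A)" by auto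
    then show ?thesis by (rule typed_closed_Box_elim)
  qed
qed

end
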